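(* There is no function $f:\Gamma^{\pm}(2)\to\mathbb C^\times$ such that $\overline C(h_1,h_2)=f(h_1)f(h_2)f(h_1h_2)^{-1}$ for all $h_1,h_2\in\Gamma^\pm(2)$; i.e. the restriction of the class of $\overline C$ to $\Gamma^\pm(2)$ is non-trivial.
   Context: $\Gamma^\pm(2)=\{g\in GL_2(\mathbb Z):g\equiv I\pmod 2\}$. Hilbert symbol $(x,y)_{\mathbb R}=-1$ if $x<0,y<0$, else $1$. For $g=\begin{pmatrix}a&b\\c&d\end{pmatrix}\in SL_2(\mathbb R)$: $x(g)=d$ if $c=0$, $x(g)=c$ otherwise; $\bar c(g_1,g_2)=(x(g_1),x(g_2))_{\mathbb R}(-x(g_1)x(g_2),x(g_1g_2))_{\mathbb R}$; $\nu_2(y,g)=(y,a)_{\mathbb R}$ if $c=0$ and $\nu_2(y,g)=1$ if $c\ne0$. Let $s(y)=\operatorname{diag}(1,y)$. For $h_1,h_2\in GL_2(\mathbb R)$ put $y_i=\det h_i$, $g_i=s(y_i)^{-1}h_i\in SL_2(\mathbb R)$, and $\overline C(h_1,h_2)=\nu_2(y_2,g_1)\,\bar c(s(y_2)^{-1}g_1s(y_2),g_2)$; this is the $\{\pm1\}$-valued 2-cocycle defining the two-fold cover $\overline{GL}_2(\mathbb R)$. *)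

theory Defs
  imports "HOL-Analysis.Analysis"
begin

type_synonym mat2 = "real^2^2"

definition hilbR :: "real \<Rightarrow> real \<Rightarrow> int" where
  "hilbR x y = (if x < 0 \<and> y < 0 then -1 else 1)"

definition xfun :: "mat2 \<Rightarrow> real" where
  "xfun g = (if g$2$1 = 0 then g$2$2 else g$2$1)"

definition cbar :: "mat2 \<Rightarrow> mat2 \<Rightarrow> int" where
  "cbar g1 g2 = hilbR (xfun g1) (xfun g2) * hilbR (- xfun g1 * xfun g2) (xfun (g1 ** g2))"

definition nu2 :: "real \<Rightarrow> mat2 \<Rightarrow> int" where
  "nu2 y g = (if g$2$1 = 0 then hilbR y (g$1$1) else 1)"

definition sdiag :: "real \<Rightarrow> mat2" where
  "sdiag y = (\<chi> i j. if i = j then (if i = 1 then 1 else y) else 0)"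

definition Cbar :: "mat2 \<Rightarrow> mat2 \<Rightarrow> int" where
  "Cbar h1 h2 =
     (let y1 = det h1; y2 = det h2;
          g1 = matrix_inv (sdiag y1) ** h1;
          g2 = matrix_inv (sdiag y2) ** h2
      in nu2 y2 g1 * cbar (matrix_inv (sdiag y2) ** g1 ** sdiag y2) g2)"

definition Gamma_pm2 :: "mat2 set" where
  "Gamma_pm2 = {g. (\<forall>i j. g$i$j \<in> \<int>) \<and> (det g = 1 \<or> det g = -1) \<and>
                   (\<forall>i j. (g$i$j - mat 1 $i$j) / 2 \<in> \<int>)}"

end

theory Submission
  imports Defs
begin

text \<open>A coboundary \<open>f h\<^sub>1 f h\<^sub>2 / f (h\<^sub>1 h\<^sub>2)\<close> takes the same value on \<open>(g, h)\<close> and \<open>(h, g)\<close>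
  whenever \<open>g\<close> and \<open>h\<close> commute. The matrices \<open>-I\<close> and \<open>s(-1) = diag(1,-1)\<close> commute and lie
  in \<open>\<Gamma>\<^sup>\<plusminus>(2)\<close>, but \<open>C(-I, s(-1)) = -1\<close> (the Hilbert symbol \<open>(-1,-1)\<^sub>\<real>\<close> enters through
  \<open>\<nu>\<^sub>2\<close>) while \<open>C(s(-1), -I) = 1\<close>.\<close>

lemma coboundary_symmetric_on_commuting:
  fixes mul :: "'a \<Rightarrow> 'a \<Rightarrow> 'a" and f :: "'a \<Rightarrow> 'b::field"
  assumes "\<forall>x\<in>G. \<forall>y\<in>G. C x y = f x * f y / f (mul x y)"
    and "g \<in> G" "h \<in> G" "mul g h = mul h g"
  shows "C g h = C h g"
  using assms by (simp add: mult.commute)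

lemma matrix_inv_eqI:
  fixes A B :: "'a::field^'n^'n"
  assumes "A ** B = mat 1"
  shows "matrix_inv A = B"
proof -
  have "\<exists>A'. A ** A' = mat 1 \<and> A' ** A = mat 1"
    using assms matrix_left_right_inverse by blast
  then have left_inverse: "matrix_inv A ** A = mat 1"
    unfolding matrix_inv_def by (rule someI2_ex) blast
  have "matrix_inv A = matrix_inv A ** (A ** B)"
    using assms by simp
  also have "\<dots> = B"
    by (simp add: matrix_mul_assoc left_inverse)
  finally show ?thesis .
qed

lemma matrix_inv_mat_one: "matrix_inv (mat 1 :: 'a::field^'n^'n) = mat 1"
  by (rule matrix_inv_eqI) simp

lemma matrix_mul_2x2_nth: "((X::mat2) ** Y) $ i $ j = X$i$1 * Y$1$j + X$i$2 * Y$2$j"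
  by (simp add: matrix_matrix_mult_def sum_2)

lemma sdiag_nth: "sdiag y $ i $ j = (if i = j then (if i = 1 then 1 else y) else 0)"
  by (simp add: sdiag_def)

lemma mat_nth: "(mat k :: mat2) $ i $ j = (if i = j then k else 0)"
  by (simp add: mat_def)

lemma sdiag_one: "sdiag 1 = mat 1"
  by (simp add: vec_eq_iff forall_2 sdiag_nth mat_nth)

lemma sdiag_mult: "sdiag y ** sdiag z = sdiag (y * z)"
  by (simp add: vec_eq_iff forall_2 sdiag_nth matrix_mul_2x2_nth)

lemma matrix_inv_sdiag:
  assumes "y \<noteq> 0"
  shows "matrix_inv (sdiag y) = sdiag (inverse y)"
  using assms by (intro matrix_inv_eqI) (simp add: sdiag_mult sdiag_one)

lemma det_sdiag: "det (sdiag y) = y"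
  by (simp add: det_2 sdiag_nth)

lemma det_mat_neg_one: "det (mat (-1) :: mat2) = 1"
  by (simp add: det_2 mat_nth)

lemma xfun_mat: "xfun (mat k) = k"
  by (simp add: xfun_def mat_nth)

lemma mat_matrix_mul_commute:
  fixes A :: "'a::comm_semiring_1^'n^'n"
  shows "mat k ** A = A ** mat k"
  unfolding matrix_matrix_mult_def mat_def
  by (auto simp: vec_eq_iff if_distrib if_distribR mult.commute cong: if_cong)

lemma mat_neg_one_in_Gamma_pm2: "mat (-1) \<in> Gamma_pm2"
  by (simp add: Gamma_pm2_def forall_2 det_mat_neg_one mat_nth)

lemma sdiag_neg_one_in_Gamma_pm2: "sdiag (-1) \<in> Gamma_pm2"
  by (simp add: Gamma_pm2_def forall_2 det_sdiag sdiag_nth mat_nth)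

lemma Cbar_mat_neg_one_sdiag_neg_one: "Cbar (mat (-1)) (sdiag (-1)) = -1"
proof -
  have conjugate_by_sdiag: "sdiag (-1) ** mat (-1) ** sdiag (-1) = mat (-1)"
    by (simp add: vec_eq_iff forall_2 sdiag_nth mat_nth matrix_mul_2x2_nth)
  have "nu2 (-1) (mat (-1)) = -1"
    by (simp add: nu2_def hilbR_def mat_nth)
  moreover have "cbar (mat (-1)) (mat 1) = 1"
    by (simp add: cbar_def hilbR_def xfun_mat)
  ultimately show ?thesis
    by (simp add: Cbar_def Let_def det_mat_neg_one det_sdiag matrix_inv_mat_one
        matrix_inv_sdiag sdiag_mult sdiag_one conjugate_by_sdiag)
qed

lemma Cbar_sdiag_neg_one_mat_neg_one: "Cbar (sdiag (-1)) (mat (-1)) = 1"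
proof -
  have "nu2 1 (mat 1) = 1"
    by (simp add: nu2_def hilbR_def mat_nth)
  moreover have "cbar (mat 1) (mat (-1)) = 1"
    by (simp add: cbar_def hilbR_def xfun_mat)
  ultimately show ?thesis
    by (simp add: Cbar_def Let_def det_mat_neg_one det_sdiag matrix_inv_mat_one
        matrix_inv_sdiag sdiag_mult sdiag_one)
qed

theorem mainTheorem14:
  shows "\<not> (\<exists>f :: mat2 \<Rightarrow> complex.
             (\<forall>h\<in>Gamma_pm2. f h \<noteq> 0) \<and>
             (\<forall>h1\<in>Gamma_pm2. \<forall>h2\<in>Gamma_pm2.
                 of_int (Cbar h1 h2) = f h1 * f h2 / f (h1 ** h2)))"
proof -
  have "(of_int (Cbar (mat (-1)) (sdiag (-1))) :: complex) = of_int (Cbar (sdiag (-1)) (mat (-1)))"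
    if "\<forall>h1\<in>Gamma_pm2. \<forall>h2\<in>Gamma_pm2. of_int (Cbar h1 h2) = f h1 * f h2 / f (h1 ** h2)"
    for f :: "mat2 \<Rightarrow> complex"
    using that by (rule coboundary_symmetric_on_commuting)
      (simp_all add: mat_neg_one_in_Gamma_pm2 sdiag_neg_one_in_Gamma_pm2 mat_matrix_mul_commute)
  then show ?thesis
    by (auto simp: Cbar_mat_neg_one_sdiag_neg_one Cbar_sdiag_neg_one_mat_neg_one)
qed

end
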